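(* Let $\Gamma$ be a finitely generated group which has a sequence of finite normal subgroups $A_i$ with $|A_i|\to\infty$. Then $\mathrm{RG}(\Gamma,(\Gamma_j))=0$ for any chain $(\Gamma_j)$ in $\Gamma$ with $\bigcap_j\Gamma_j=\{1\}$.
   Context: A chain in $\Gamma$ is a decreasing infinite sequence $\Gamma=\Gamma_0>\Gamma_1>\cdots$ of finite index subgroups (not necessarily normal). With $d(H)$ the minimal number of generators of $H$, $r(\Gamma,H)=(d(H)-1)/|\Gamma:H|$ and $\mathrm{RG}(\Gamma,(\Gamma_j))=\lim_j r(\Gamma,\Gamma_j)$. *)

theory Defs
  imports Complex_Main "HOL-Algebra.Algebra"
begin

definition min_gens :: "('a, 'b) monoid_scheme \<Rightarrow> 'a set \<Rightarrow> nat" where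
  "min_gens G H = (LEAST n. \<exists>S. S \<subseteq> H \<and> finite S \<and> card S = n \<and> generate G S = H)"

definition grp_index :: "('a, 'b) monoid_scheme \<Rightarrow> 'a set \<Rightarrow> nat" where
  "grp_index G H = card (rcosets\<^bsub>G\<^esub> H)"

definition rg_ratio :: "('a, 'b) monoid_scheme \<Rightarrow> 'a set \<Rightarrow> real" where
  "rg_ratio G H = (real (min_gens G H) - 1) / real (grp_index G H)"

definition finitely_generated_group :: "('a, 'b) monoid_scheme \<Rightarrow> bool" where
  "finitely_generated_group G \<longleftrightarrow> (\<exists>S. S \<subseteq> carrier G \<and> finite S \<and> generate G S = carrier G)"

definition is_chain :: "('a, 'b) monoid_scheme \<Rightarrow> (nat \<Rightarrow> 'a set) \<Rightarrow> bool" where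
  "is_chain G C \<longleftrightarrow> C 0 = carrier G \<and>
     (\<forall>j. subgroup (C j) G \<and> finite (rcosets\<^bsub>G\<^esub> (C j)) \<and> C (Suc j) \<subset> C j)"

end

(*
  Let d = d(G). If a finite normal subgroup A meets a finite index subgroup C trivially, then
  K = A C satisfies |G : K| |A| <= |G : C|. Schreier's lemma gives d(K) <= |G : K| d, and C,
  a complement of A in K, needs no more generators than K. Hence |r(G, C)| <= (d + 1) / |A|.
  Along a chain with trivial intersection every finite A_i eventually meets C_j trivially, so
  the ratios are eventually bounded by (d + 1) / |A_i| for every i, and |A_i| tends to infinity.
*)
theory Submission
  imports Defs "HOL-Algebra.SndIsomorphismGrp"
begin

lemma min_gens_le:
  assumes "S \<subseteq> H" "finite S" "generate G S = H"
  shows "min_gens G H \<le> card S"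
  unfolding min_gens_def using assms by (intro Least_le) blast

lemma abs_diff_one_divide_le:
  fixes m k s a n :: nat
  assumes m: "m \<le> k * s" and k: "0 < k" and a: "0 < a" and n: "k * a \<le> n"
  shows "\<bar>(real m - 1) / real n\<bar> \<le> (real s + 1) / real a"
proof -
  have kr: "1 \<le> real k" and ar: "1 \<le> real a"
    using k a by simp_all
  have "0 < n"
    using k a n by (metis le_trans not_le nat_0_less_mult_iff)
  then have nr: "0 < real n"
    by simp
  have kan: "real k * real a \<le> real n"
    using n by (simp flip: of_nat_mult)
  have "real m \<le> real k * real s"
    using m by (simp flip: of_nat_mult)
  then have "\<bar>real m - 1\<bar> \<le> real k * (real s + 1)"
    using kr by (simp add: abs_le_iff algebra_simps)
  then have "\<bar>(real m - 1) / real n\<bar> \<le> real k * (real s + 1) / real n"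
    unfolding abs_divide by (simp add: divide_right_mono)
  also have "\<dots> \<le> real k * (real s + 1) / (real k * real a)"
    using kan kr ar nr by (intro divide_left_mono) simp_all
  also have "\<dots> = (real s + 1) / real a"
    using k by (intro mult_divide_mult_cancel_left) simp
  finally show ?thesis .
qed

context group begin

text \<open>Taking \<open>\<one>\<close> as the representative of \<open>H\<close> itself makes \<open>schreier_gen H H\<close> the identity
  on \<open>H\<close>.\<close>

definition coset_rep :: "'a set \<Rightarrow> 'a set \<Rightarrow> 'a" where
  "coset_rep H D = (if D = H then \<one> else (SOME x. x \<in> D))"

definition schreier_gen :: "'a set \<Rightarrow> 'a set \<Rightarrow> 'a \<Rightarrow> 'a" where
  "schreier_gen H D x = coset_rep H D \<otimes> x \<otimes> inv (coset_rep H (D #> x))"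

definition schreier_gens :: "'a set \<Rightarrow> 'a set \<Rightarrow> 'a set" where
  "schreier_gens H S = (\<lambda>(D, s). schreier_gen H D s) ` ((rcosets H) \<times> S)"

lemma coset_rep_self [simp]: "coset_rep H H = \<one>"
  by (simp add: coset_rep_def)

context
  fixes H assumes H: "subgroup H G"
begin

lemma coset_rep_mem:
  assumes "D \<in> rcosets H"
  shows "coset_rep H D \<in> D"
proof (cases "D = H")
  case True
  then show ?thesis using H by (simp add: subgroup.one_closed)
next
  case False
  obtain g where "g \<in> carrier G" "D = H #> g"
    using assms unfolding RCOSETS_def by blast
  then have "g \<in> D" using H rcos_self by blast
  then show ?thesis using False unfolding coset_rep_def by (metis someI)
qed

lemma coset_rep_carrier:
  assumes "D \<in> rcosets H"
  shows "coset_rep H D \<in> carrier G"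
  using coset_rep_mem[OF assms] subgroup.rcosets_carrier[OF H is_group assms] by blast

lemma r_coset_coset_rep:
  assumes "D \<in> rcosets H"
  shows "H #> coset_rep H D = D"
proof -
  obtain g where g: "g \<in> carrier G" "D = H #> g"
    using assms unfolding RCOSETS_def by blast
  then show ?thesis
    using repr_independence[OF _ g(1) H] coset_rep_mem[OF assms] by simp
qed

lemma rcosets_r_coset_closed:
  assumes "D \<in> rcosets H" "x \<in> carrier G"
  shows "D #> x \<in> rcosets H"
proof -
  obtain g where g: "g \<in> carrier G" "D = H #> g"
    using assms unfolding RCOSETS_def by blast
  then have "D #> x = H #> (g \<otimes> x)"
    using coset_mult_assoc subgroup.subset[OF H] assms(2) by simp
  then show ?thesis
    using rcosetsI subgroup.subset[OF H] g(1) assms(2) by simp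
qed

lemma schreier_gen_mem:
  assumes D: "D \<in> rcosets H" and x: "x \<in> carrier G"
  shows "schreier_gen H D x \<in> H"
proof -
  define t where "t = coset_rep H D"
  define t' where "t' = coset_rep H (D #> x)"
  have t: "t \<in> carrier G" "H #> t = D"
    unfolding t_def using coset_rep_carrier[OF D] r_coset_coset_rep[OF D] by simp_all
  have t': "t' \<in> carrier G" "t' \<in> D #> x"
    unfolding t'_def using coset_rep_carrier coset_rep_mem rcosets_r_coset_closed[OF D x]
    by simp_all
  have "D #> x = H #> (t \<otimes> x)"
    using coset_mult_assoc[OF subgroup.subset[OF H] t(1) x] t(2) by simp
  then have "t' \<otimes> inv (t \<otimes> x) \<in> H"
    using subgroup.rcos_module_imp[OF H is_group, of "t \<otimes> x" t'] t' t(1) x by simp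
  then have "inv (t' \<otimes> inv (t \<otimes> x)) \<in> H"
    by (rule subgroup.m_inv_closed[OF H])
  also have "inv (t' \<otimes> inv (t \<otimes> x)) = t \<otimes> x \<otimes> inv t'"
    using t' t(1) x by (simp add: inv_mult_group)
  finally show ?thesis
    unfolding schreier_gen_def t_def t'_def .
qed

lemma schreier_gen_mult:
  assumes "D \<in> rcosets H" "x \<in> carrier G" "y \<in> carrier G"
  shows "schreier_gen H D (x \<otimes> y) = schreier_gen H D x \<otimes> schreier_gen H (D #> x) y"
proof -
  have "(D #> x) #> y = D #> (x \<otimes> y)"
    using coset_mult_assoc subgroup.rcosets_carrier[OF H is_group] assms by blast
  moreover have "coset_rep H D \<in> carrier G" "coset_rep H (D #> x) \<in> carrier G"
    "coset_rep H (D #> (x \<otimes> y)) \<in> carrier G"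
    using coset_rep_carrier rcosets_r_coset_closed assms by auto
  ultimately show ?thesis
    unfolding schreier_gen_def using assms(2,3) by (simp add: m_assoc inv_solve_left)
qed

lemma schreier_gen_one:
  assumes "D \<in> rcosets H"
  shows "schreier_gen H D \<one> = \<one>"
  using coset_rep_carrier[OF assms] subgroup.rcosets_carrier[OF H is_group assms]
  unfolding schreier_gen_def by simp

lemma schreier_gen_inv:
  assumes D: "D \<in> rcosets H" and x: "x \<in> carrier G"
  shows "schreier_gen H D (inv x) = inv (schreier_gen H (D #> inv x) x)"
proof -
  have "schreier_gen H D (inv x) \<otimes> schreier_gen H (D #> inv x) x = \<one>"
    using schreier_gen_mult[OF D inv_closed[OF x] x] schreier_gen_one[OF D] x by simp
  moreover have "schreier_gen H D (inv x) \<in> carrier G" "schreier_gen H (D #> inv x) x \<in> carrier G"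
    using schreier_gen_mem D x rcosets_r_coset_closed[OF D inv_closed[OF x]]
      subgroup.mem_carrier[OF H] by simp_all
  ultimately show ?thesis
    using inv_equality by simp
qed

lemma schreier_gen_self:
  assumes "h \<in> H"
  shows "schreier_gen H H h = h"
  using assms coset_join2 subgroup.mem_carrier[OF H] H unfolding schreier_gen_def by simp

lemma generate_schreier_gens:
  assumes S: "S \<subseteq> carrier G" "generate G S = carrier G"
  shows "generate G (schreier_gens H S) = H"
proof
  show "generate G (schreier_gens H S) \<subseteq> H"
    using S(1) schreier_gen_mem
    by (intro generate_subgroup_incl[OF _ H]) (auto simp: schreier_gens_def)
next
  have gen: "\<forall>D \<in> rcosets H. schreier_gen H D x \<in> generate G (schreier_gens H S)"
    if "x \<in> generate G S" for x
    using that
  proof (induction rule: generate.induct)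
    case one
    then show ?case by (simp add: schreier_gen_one generate.one)
  next
    case (incl s)
    then show ?case unfolding schreier_gens_def by (auto intro: generate.incl)
  next
    case (inv s)
    show ?case
    proof
      fix D assume D: "D \<in> rcosets H"
      have "schreier_gen H (D #> inv s) s \<in> schreier_gens H S"
        unfolding schreier_gens_def
        using rcosets_r_coset_closed[OF D inv_closed] inv S(1) by blast
      then have "inv (schreier_gen H (D #> inv s) s) \<in> generate G (schreier_gens H S)"
        by (rule generate.inv)
      then show "schreier_gen H D (inv s) \<in> generate G (schreier_gens H S)"
        using schreier_gen_inv[OF D, of s] inv S(1) by auto
    qed
  next
    case (eng x y)
    have "x \<in> carrier G" "y \<in> carrier G"
      using eng.hyps generate_in_carrier[OF S(1)] by simp_all
    then show ?case
      using eng.IH schreier_gen_mult rcosets_r_coset_closed by (simp add: generate.eng)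
  qed
  show "H \<subseteq> generate G (schreier_gens H S)"
  proof
    fix h assume h: "h \<in> H"
    then have "h \<in> generate G S"
      using S(2) subgroup.mem_carrier[OF H] by simp
    then have "schreier_gen H H h \<in> generate G (schreier_gens H S)"
      using gen subgroup.subgroup_in_rcosets[OF H is_group] by blast
    then show "h \<in> generate G (schreier_gens H S)"
      using schreier_gen_self[OF h] by simp
  qed
qed

end

lemma card_schreier_gens_le:
  assumes "finite (rcosets H)" "finite S"
  shows "card (schreier_gens H S) \<le> card (rcosets H) * card S"
  unfolding schreier_gens_def
  using card_image_le[of "(rcosets H) \<times> S"] assms by (simp add: card_cartesian_product)

lemma second_isomorphism_grpI:
  assumes "A \<lhd> G" "subgroup K G"
  shows "second_isomorphism_grp A G K"
  using assms by (intro second_isomorphism_grp.intro second_isomorphism_grp_axioms.intro)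

lemma generate_subset_normal_set_mult:
  assumes A: "A \<lhd> G" and T: "T \<subseteq> carrier G" and S: "S \<subseteq> A <#> T"
  shows "generate G S \<subseteq> A <#> generate G T"
proof (rule generate_subgroup_incl)
  have "A <#> T \<subseteq> A <#> generate G T"
    using mono_set_mult[of A A T "generate G T" G] generate.incl[of _ T G] by blast
  then show "S \<subseteq> A <#> generate G T"
    using S by blast
  show "subgroup (A <#> generate G T) G"
    using second_isomorphism_grp.normal_set_mult_subgroup
      second_isomorphism_grpI[OF A generate_is_subgroup[OF T]] .
qed

lemma subset_of_subset_set_mult:
  assumes C: "subgroup C G" and A: "A \<subseteq> carrier G" "C \<inter> A = {\<one>}"
    and H: "H \<subseteq> C" "C \<subseteq> A <#> H"
  shows "C \<subseteq> H"
proof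
  fix c assume c: "c \<in> C"
  then obtain a h where a: "a \<in> A" and h: "h \<in> H" and c_eq: "c = a \<otimes> h"
    using H(2) unfolding set_mult_def by blast
  have hC: "h \<in> C"
    using h H(1) by blast
  have "a \<in> carrier G" "h \<in> carrier G"
    using a hC A(1) subgroup.mem_carrier[OF C] by auto
  then have "a = c \<otimes> inv h"
    using c_eq by (simp add: m_assoc)
  also have "\<dots> \<in> C"
    by (rule subgroup.m_closed[OF C c subgroup.m_inv_closed[OF C hC]])
  finally have "a = \<one>"
    using a A(2) by blast
  then show "c \<in> H"
    using c_eq h \<open>h \<in> carrier G\<close> by simp
qed

lemma min_gens_le_of_generate_set_mult:
  assumes A: "A \<lhd> G" and C: "subgroup C G" and CA: "C \<inter> A = {\<one>}"
    and S: "S \<subseteq> A <#> C" "finite S" "generate G S = A <#> C"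
  shows "min_gens G C \<le> card S"
proof -
  have "\<forall>s\<in>S. \<exists>c. c \<in> C \<and> s \<in> A #> c"
    using S(1) unfolding set_mult_def r_coset_def by blast
  then obtain \<phi> where \<phi>: "\<forall>s\<in>S. \<phi> s \<in> C \<and> s \<in> A #> \<phi> s"
    by (rule bchoice[THEN exE])
  define T where "T = \<phi> ` S"
  have TC: "T \<subseteq> C"
    unfolding T_def using \<phi> by blast
  have Ac: "A \<subseteq> carrier G" and Cc: "C \<subseteq> carrier G"
    using A C by (simp_all add: normal_imp_subgroup subgroup.subset)
  have "S \<subseteq> A <#> T"
  proof
    fix s assume s: "s \<in> S"
    then have "s \<in> A <#> {\<phi> s}"
      using \<phi> by (simp add: r_coset_eq_set_mult)
    then show "s \<in> A <#> T"
      using mono_set_mult[of A A "{\<phi> s}" T G] s unfolding T_def by blast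
  qed
  then have "A <#> C \<subseteq> A <#> generate G T"
    using generate_subset_normal_set_mult[OF A, of T S] TC Cc S(3) by simp
  moreover have "C \<subseteq> A <#> C"
    using second_isomorphism_grp.S_contained_in_set_mult second_isomorphism_grpI[OF A C] .
  moreover have gen_T_sub: "generate G T \<subseteq> C"
    by (rule generate_subgroup_incl[OF TC C])
  ultimately have "generate G T = C"
    using subset_of_subset_set_mult[OF C Ac CA] by blast
  then have "min_gens G C \<le> card T"
    using min_gens_le[OF TC] S(2) unfolding T_def by blast
  also have "card T \<le> card S"
    unfolding T_def using card_image_le S(2) by blast
  finally show ?thesis .
qed

lemma r_coset_absorb_left:
  assumes K: "subgroup K G" and k: "k \<in> K" and x: "x \<in> carrier G"
  shows "K #> (k \<otimes> x) = K #> x"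
proof -
  have "K #> (k \<otimes> x) = (K #> k) #> x"
    using coset_mult_assoc[OF subgroup.subset[OF K] subgroup.mem_carrier[OF K k] x] by simp
  then show ?thesis
    using coset_join2[OF subgroup.mem_carrier[OF K k] K k] by simp
qed

lemma r_coset_eq_mono:
  assumes C: "subgroup C G" and K: "subgroup K G" and "C \<subseteq> K"
    and x: "x \<in> carrier G" and y: "y \<in> carrier G" and eq: "C #> x = C #> y"
  shows "K #> x = K #> y"
proof -
  have "y \<in> C #> x"
    using rcos_self[OF y C] eq by simp
  then have "y \<in> K #> x"
    using \<open>C \<subseteq> K\<close> unfolding r_coset_def by blast
  then show ?thesis
    using repr_independence[OF _ x K] by simp
qed

lemma inj_on_rcosets_times:
  assumes C: "subgroup C G" and K: "subgroup K G" and A: "subgroup A G"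
    and "A \<subseteq> K" "C \<subseteq> K" and CA: "C \<inter> A = {\<one>}"
  shows "inj_on (\<lambda>(D, a). C #> (a \<otimes> coset_rep K D)) ((rcosets K) \<times> A)"
proof (rule inj_onI, clarify)
  fix D a D' b
  assume D: "D \<in> rcosets K" and a: "a \<in> A" and D': "D' \<in> rcosets K" and b: "b \<in> A"
    and eq: "C #> (a \<otimes> coset_rep K D) = C #> (b \<otimes> coset_rep K D')"
  define t where "t = coset_rep K D"
  define t' where "t' = coset_rep K D'"
  have t: "t \<in> carrier G" "K #> t = D" and t': "t' \<in> carrier G" "K #> t' = D'"
    unfolding t_def t'_def using coset_rep_carrier[OF K] r_coset_coset_rep[OF K] D D'
    by simp_all
  have ab: "a \<in> carrier G" "b \<in> carrier G"
    using a b subgroup.mem_carrier[OF A] by auto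
  have "K #> (a \<otimes> t) = K #> (b \<otimes> t')"
    using r_coset_eq_mono[OF C K \<open>C \<subseteq> K\<close>] eq ab t(1) t'(1) unfolding t_def t'_def by simp
  then have DD': "D = D'"
    using r_coset_absorb_left[OF K] a b \<open>A \<subseteq> K\<close> t t' by auto
  then have "(b \<otimes> t) \<otimes> inv (a \<otimes> t) \<in> C"
    using subgroup.rcos_module_imp[OF C is_group, of "a \<otimes> t" "b \<otimes> t"] eq ab t(1)
      rcos_self[OF _ C] unfolding t_def t'_def by simp
  also have "(b \<otimes> t) \<otimes> inv (a \<otimes> t) = b \<otimes> inv a"
    using ab t by (simp add: inv_mult_group m_assoc) (simp add: m_assoc [symmetric])
  finally have "b \<otimes> inv a \<in> C" .
  moreover have "b \<otimes> inv a \<in> A"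
    using a b A by (simp add: subgroup.m_closed subgroup.m_inv_closed)
  ultimately have "b \<otimes> inv a = \<one>"
    using CA by blast
  then have "a = b"
    using ab by (simp add: inv_solve_right')
  then show "D = D' \<and> a = b"
    using DD' by simp
qed

lemma card_rcosets_set_mult_le:
  assumes A: "A \<lhd> G" "finite A" and C: "subgroup C G" "finite (rcosets C)"
    and CA: "C \<inter> A = {\<one>}"
  shows "finite (rcosets (A <#> C))" "card (rcosets (A <#> C)) * card A \<le> card (rcosets C)"
proof -
  define K where "K = A <#> C"
  interpret second_isomorphism_grp A G C
    using second_isomorphism_grpI[OF A(1) C(1)] .
  have K: "subgroup K G"
    unfolding K_def by (rule normal_set_mult_subgroup)
  have "A \<subseteq> K" "C \<subseteq> K"
    unfolding K_def by (rule H_contained_in_set_mult, rule S_contained_in_set_mult)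
  then have inj: "inj_on (\<lambda>(D, a). C #> (a \<otimes> coset_rep K D)) ((rcosets K) \<times> A)"
    using inj_on_rcosets_times[OF C(1) K is_subgroup] CA by blast
  have into: "(\<lambda>(D, a). C #> (a \<otimes> coset_rep K D)) ` ((rcosets K) \<times> A) \<subseteq> rcosets C"
    using coset_rep_carrier[OF K] subgroup.subset[OF C(1)] subgroup.mem_carrier[OF is_subgroup]
    by (auto intro!: rcosetsI)
  have "finite ((rcosets K) \<times> A)" "card ((rcosets K) \<times> A) \<le> card (rcosets C)"
    using inj_on_finite[OF inj into C(2)] card_inj_on_le[OF inj into C(2)] by simp_all
  moreover have "A \<noteq> {}"
    using subgroup.one_closed[OF is_subgroup] by blast
  ultimately show "finite (rcosets (A <#> C))" "card (rcosets (A <#> C)) * card A \<le> card (rcosets C)"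
    unfolding K_def by (auto simp: card_cartesian_product dest: finite_cartesian_productD1)
qed

lemma abs_rg_ratio_le:
  assumes S: "S \<subseteq> carrier G" "finite S" "generate G S = carrier G"
    and A: "A \<lhd> G" "finite A"
    and C: "subgroup C G" "finite (rcosets C)" "C \<inter> A = {\<one>}"
  shows "\<bar>rg_ratio G C\<bar> \<le> (real (card S) + 1) / real (card A)"
proof -
  define K where "K = A <#> C"
  have K: "subgroup K G"
    unfolding K_def
    using second_isomorphism_grp.normal_set_mult_subgroup second_isomorphism_grpI[OF A(1) C(1)] .
  have finK: "finite (rcosets K)" and index: "card (rcosets K) * card A \<le> card (rcosets C)"
    using card_rcosets_set_mult_le[OF A C] unfolding K_def by simp_all
  have gen: "generate G (schreier_gens K S) = K"
    by (rule generate_schreier_gens[OF K S(1,3)])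
  have "min_gens G C \<le> card (schreier_gens K S)"
  proof (rule min_gens_le_of_generate_set_mult[OF A(1) C(1) C(3)])
    show "schreier_gens K S \<subseteq> A <#> C"
      using gen generate.incl[of _ "schreier_gens K S" G] unfolding K_def by blast
    show "finite (schreier_gens K S)"
      unfolding schreier_gens_def using finK S(2) by simp
    show "generate G (schreier_gens K S) = A <#> C"
      using gen unfolding K_def .
  qed
  also have "\<dots> \<le> card (rcosets K) * card S"
    by (rule card_schreier_gens_le[OF finK S(2)])
  finally have "min_gens G C \<le> card (rcosets K) * card S" .
  moreover have "0 < card (rcosets K)"
    using subgroup.subgroup_in_rcosets[OF K is_group] finK card_gt_0_iff by blast
  moreover have "0 < card A"
    using subgroup.one_closed[OF normal_imp_subgroup[OF A(1)]] A(2) card_gt_0_iff by blast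
  ultimately show ?thesis
    using index unfolding rg_ratio_def grp_index_def by (rule abs_diff_one_divide_le)
qed

end

lemma eventually_inter_eq_Inter:
  fixes C :: "nat \<Rightarrow> 'a set"
  assumes "decseq C" "finite A"
  shows "eventually (\<lambda>j. C j \<inter> A = (\<Inter>j. C j) \<inter> A) sequentially"
proof -
  have "eventually (\<lambda>j. a \<notin> C j) sequentially" if a: "a \<in> A - (\<Inter>j. C j)" for a
  proof -
    obtain i where "a \<notin> C i"
      using a by blast
    then have "\<forall>j\<ge>i. a \<notin> C j"
      using decseqD[OF assms(1)] by blast
    then show ?thesis
      unfolding eventually_sequentially by blast
  qed
  then have "eventually (\<lambda>j. \<forall>a \<in> A - (\<Inter>j. C j). a \<notin> C j) sequentially"
    using assms(2) by (simp add: eventually_ball_finite)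
  then show ?thesis
    by (rule eventually_mono) blast
qed

lemma LIMSEQ_0_if_eventually_abs_le:
  fixes f b :: "nat \<Rightarrow> real"
  assumes "\<And>i. eventually (\<lambda>j. \<bar>f j\<bar> \<le> b i) sequentially" and "b \<longlonglongrightarrow> 0"
  shows "f \<longlonglongrightarrow> 0"
proof (rule tendstoI)
  fix e :: real assume "0 < e"
  then have "eventually (\<lambda>i. b i < e) sequentially"
    using order_tendstoD(2)[OF assms(2)] by blast
  then obtain i where "b i < e"
    unfolding eventually_sequentially by blast
  show "eventually (\<lambda>j. dist (f j) 0 < e) sequentially"
    using assms(1)[of i]
  proof (rule eventually_mono)
    fix j assume "\<bar>f j\<bar> \<le> b i"
    then show "dist (f j) 0 < e"
      using \<open>b i < e\<close> by simp
  qed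
qed

theorem proposition4:
  fixes G :: "('a, 'b) monoid_scheme" and A :: "nat \<Rightarrow> 'a set" and C :: "nat \<Rightarrow> 'a set"
  assumes "group G"
    and "finitely_generated_group G"
    and "\<And>i. A i \<lhd> G"
    and "\<And>i. finite (A i)"
    and "filterlim (\<lambda>i. card (A i)) at_top sequentially"
    and "is_chain G C"
    and "(\<Inter>j. C j) = {\<one>\<^bsub>G\<^esub>}"
  shows "(\<lambda>j. rg_ratio G (C j)) \<longlonglongrightarrow> 0"
proof -
  interpret group G by fact
  obtain S where S: "S \<subseteq> carrier G" "finite S" "generate G S = carrier G"
    using assms(2) unfolding finitely_generated_group_def by blast
  have C: "subgroup (C j) G" "finite (rcosets\<^bsub>G\<^esub> (C j))" and "decseq C" for j
    using assms(6) unfolding is_chain_def by (auto intro: decseq_SucI)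
  show ?thesis
  proof (rule LIMSEQ_0_if_eventually_abs_le)
    fix i
    have "\<one>\<^bsub>G\<^esub> \<in> A i"
      using subgroup.one_closed[OF normal_imp_subgroup[OF assms(3)]] .
    then have "eventually (\<lambda>j. C j \<inter> A i = {\<one>\<^bsub>G\<^esub>}) sequentially"
      using eventually_inter_eq_Inter[OF \<open>decseq C\<close> assms(4)[of i]] assms(7) by simp
    then show "eventually (\<lambda>j. \<bar>rg_ratio G (C j)\<bar> \<le> (real (card S) + 1) / real (card (A i)))
        sequentially"
      by (rule eventually_mono) (rule abs_rg_ratio_le[OF S assms(3,4) C])
  next
    have "filterlim (\<lambda>i. real (card (A i))) at_top sequentially"
      using filterlim_compose[OF filterlim_real_sequentially assms(5)] .
    then show "(\<lambda>i. (real (card S) + 1) / real (card (A i))) \<longlonglongrightarrow> 0"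
      by (intro tendsto_divide_0[OF tendsto_const] filterlim_at_top_imp_at_infinity)
  qed
qed

end
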